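(* Let $\rho:A\to C$ and $\sigma:B\to C$ be ring homomorphisms and let $D:=\rho\times_C\sigma=\{(a,b)\in A\times B:\rho(a)=\sigma(b)\}$. Let $p_A:D\to A$ and $p_B:D\to B$ be the restrictions to $D$ of the projections of $A\times B$. The following are equivalent: (i) the set of all ideals of $D$ is totally ordered by inclusion; (ii) at least one of the following holds: (a) $\rho$ is injective and the set of all ideals of $p_B(D)$ is totally ordered by inclusion; (b) $\sigma$ is injective and the set of all ideals of $p_A(D)$ is totally ordered by inclusion.
   Context: All rings are commutative with identity. *)

theory Defs
  imports "HOL-Algebra.Algebra"
begin

definition fiber_product ::
  "('a, 'm) ring_scheme \<Rightarrow> ('b, 'n) ring_scheme \<Rightarrow> ('a \<Rightarrow> 'c) \<Rightarrow> ('b \<Rightarrow> 'c) \<Rightarrow> ('a \<times> 'b) ring"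
  where "fiber_product A B \<rho> \<sigma> =
    (RDirProd A B) \<lparr> carrier := {(a, b). a \<in> carrier A \<and> b \<in> carrier B \<and> \<rho> a = \<sigma> b} \<rparr>"

definition ideals_chain :: "('a, 'm) ring_scheme \<Rightarrow> bool"
  where "ideals_chain R \<longleftrightarrow> (\<forall>I J. ideal I R \<longrightarrow> ideal J R \<longrightarrow> I \<subseteq> J \<or> J \<subseteq> I)"

end

theory Submission
  imports Defs
begin

text \<open>In \<open>D = \<rho> \<times>\<^sub>C \<sigma>\<close> the kernel of \<open>p\<^sub>B\<close> is \<open>{(a, 0). \<rho> a = 0}\<close> and the kernel of
  \<open>p\<^sub>A\<close> is \<open>{(0, b). \<sigma> b = 0}\<close>. These two ideals meet only in \<open>0\<close>, so if the ideals of \<open>D\<close>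
  form a chain one of them vanishes, i.e. \<open>\<rho>\<close> or \<open>\<sigma>\<close> is injective. Conversely, if \<open>\<rho>\<close> is
  injective then so is \<open>p\<^sub>B\<close>, hence \<open>D \<cong> p\<^sub>B(D)\<close> and the two rings have the same ideals.\<close>

lemma RDirProd_simps:
  "x \<otimes>\<^bsub>RDirProd A B\<^esub> y = (fst x \<otimes>\<^bsub>A\<^esub> fst y, snd x \<otimes>\<^bsub>B\<^esub> snd y)"
  "x \<oplus>\<^bsub>RDirProd A B\<^esub> y = (fst x \<oplus>\<^bsub>A\<^esub> fst y, snd x \<oplus>\<^bsub>B\<^esub> snd y)"
  "\<one>\<^bsub>RDirProd A B\<^esub> = (\<one>\<^bsub>A\<^esub>, \<one>\<^bsub>B\<^esub>)"
  "\<zero>\<^bsub>RDirProd A B\<^esub> = (\<zero>\<^bsub>A\<^esub>, \<zero>\<^bsub>B\<^esub>)"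
  by (auto simp: RDirProd_def DirProd_def monoid.defs case_prod_beta)

lemma RDirProd_a_inv:
  assumes "ring A" "ring B" "a \<in> carrier A" "b \<in> carrier B"
  shows "\<ominus>\<^bsub>RDirProd A B\<^esub> (a, b) = (\<ominus>\<^bsub>A\<^esub> a, \<ominus>\<^bsub>B\<^esub> b)"
proof -
  interpret P: ring "RDirProd A B" using RDirProd_ring assms by blast
  show ?thesis
    by (rule P.minus_equality)
      (use assms in \<open>auto simp: RDirProd_simps RDirProd_carrier ring.ring_simprules\<close>)
qed

lemma carrier_fiber_product:
  "carrier (fiber_product A B \<rho> \<sigma>) = {(a, b). a \<in> carrier A \<and> b \<in> carrier B \<and> \<rho> a = \<sigma> b}"
  by (simp add: fiber_product_def)

lemma ring_fiber_product:
  assumes "ring A" "ring B" "ring C" "\<rho> \<in> ring_hom A C" "\<sigma> \<in> ring_hom B C"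
  shows "ring (fiber_product A B \<rho> \<sigma>)"
proof -
  interpret A: ring A by fact
  interpret B: ring B by fact
  interpret P: ring "RDirProd A B" using RDirProd_ring assms by blast
  interpret \<rho>: ring_hom_ring A C \<rho> using assms ring_hom_ringI2 by blast
  interpret \<sigma>: ring_hom_ring B C \<sigma> using assms ring_hom_ringI2 by blast
  have "subring (carrier (fiber_product A B \<rho> \<sigma>)) (RDirProd A B)"
    unfolding carrier_fiber_product
    by (rule P.subringI)
      (auto simp: RDirProd_carrier RDirProd_simps RDirProd_a_inv[OF A.ring_axioms B.ring_axioms])
  then show ?thesis
    using P.subring_is_ring by (simp add: fiber_product_def)
qed

lemma fst_ring_hom_fiber_product: "fst \<in> ring_hom (fiber_product A B \<rho> \<sigma>) A"
  by (rule ring_hom_memI) (auto simp: fiber_product_def RDirProd_simps)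

lemma snd_ring_hom_fiber_product: "snd \<in> ring_hom (fiber_product A B \<rho> \<sigma>) B"
  by (rule ring_hom_memI) (auto simp: fiber_product_def RDirProd_simps)

lemma ideals_chain_surjective_image:
  assumes "ring R" "ring S" "h \<in> ring_hom R S" "h ` carrier R = carrier S" "ideals_chain R"
  shows "ideals_chain S"
  unfolding ideals_chain_def
proof (intro allI impI)
  fix I J assume I: "ideal I S" and J: "ideal J S"
  have surj: "h ` {r \<in> carrier R. h r \<in> K} = K" if "ideal K S" for K
  proof -
    have "K \<subseteq> carrier S"
      using that by (simp add: additive_subgroup.a_subset ideal.axioms(1))
    then show ?thesis
      using assms(4) by (fastforce simp: image_iff)
  qed
  interpret h: ring_hom_ring R S h using assms ring_hom_ringI2 by blast
  have "{r \<in> carrier R. h r \<in> I} \<subseteq> {r \<in> carrier R. h r \<in> J}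
      \<or> {r \<in> carrier R. h r \<in> J} \<subseteq> {r \<in> carrier R. h r \<in> I}"
    using assms(5) h.ideal_vimage[OF I] h.ideal_vimage[OF J] unfolding ideals_chain_def by blast
  then have "h ` {r \<in> carrier R. h r \<in> I} \<subseteq> h ` {r \<in> carrier R. h r \<in> J}
      \<or> h ` {r \<in> carrier R. h r \<in> J} \<subseteq> h ` {r \<in> carrier R. h r \<in> I}"
    using image_mono by blast
  then show "I \<subseteq> J \<or> J \<subseteq> I"
    unfolding surj[OF I] surj[OF J] .
qed

lemma ideals_chain_iff_image_of_inj:
  assumes "ring R" "ring S" "h \<in> ring_hom R S" "inj_on h (carrier R)"
  shows "ideals_chain R \<longleftrightarrow> ideals_chain (S\<lparr>carrier := h ` carrier R\<rparr>)"
    (is "_ \<longleftrightarrow> ideals_chain ?T")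
proof -
  interpret h: ring_hom_ring R S h using assms ring_hom_ringI2 by blast
  have "ring ?T"
    using h.img_is_subring[OF ring.carrier_is_subring[OF assms(1)]] h.S.subring_is_ring by blast
  have hom: "h \<in> ring_hom R ?T"
    using assms(3) by (auto simp: ring_hom_def)
  have "h \<in> ring_iso R ?T"
    using hom assms(4) by (simp add: ring_iso_def bij_betw_def)
  then have inv: "inv_into (carrier R) h \<in> ring_hom ?T R"
    "inv_into (carrier R) h ` carrier ?T = carrier R"
    using ring_iso_set_sym[OF assms(1)] unfolding ring_iso_def bij_betw_def by blast+
  show ?thesis
  proof
    show "ideals_chain R \<Longrightarrow> ideals_chain ?T"
      using ideals_chain_surjective_image[OF assms(1) \<open>ring ?T\<close> hom] by simp
    show "ideals_chain ?T \<Longrightarrow> ideals_chain R"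
      using ideals_chain_surjective_image[OF \<open>ring ?T\<close> assms(1) inv] .
  qed
qed

lemma inj_on_snd_fiber_product:
  "inj_on \<rho> (carrier A) \<Longrightarrow> inj_on snd (carrier (fiber_product A B \<rho> \<sigma>))"
  unfolding carrier_fiber_product inj_on_def by auto

lemma inj_on_fst_fiber_product:
  "inj_on \<sigma> (carrier B) \<Longrightarrow> inj_on fst (carrier (fiber_product A B \<rho> \<sigma>))"
  unfolding carrier_fiber_product inj_on_def by auto

lemma inj_on_left_if_kernel_snd_subset_kernel_fst:
  assumes "ring A" "ring B" "ring C" "\<rho> \<in> ring_hom A C" "\<sigma> \<in> ring_hom B C"
    and sub: "a_kernel (fiber_product A B \<rho> \<sigma>) B snd \<subseteq> a_kernel (fiber_product A B \<rho> \<sigma>) A fst"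
  shows "inj_on \<rho> (carrier A)"
proof -
  have \<rho>: "ring_hom_ring A C \<rho>" and \<sigma>0: "\<sigma> \<zero>\<^bsub>B\<^esub> = \<zero>\<^bsub>C\<^esub>"
    using assms ring_hom_ringI2 ring_hom_zero by blast+
  have "a = \<zero>\<^bsub>A\<^esub>" if "a \<in> a_kernel A C \<rho>" for a
  proof -
    have "(a, \<zero>\<^bsub>B\<^esub>) \<in> a_kernel (fiber_product A B \<rho> \<sigma>) B snd"
      using that \<sigma>0 ring.ring_simprules(2)[OF assms(2)]
      by (simp add: a_kernel_def' carrier_fiber_product)
    with sub show ?thesis
      by (simp add: a_kernel_def' subset_iff)
  qed
  then have "a_kernel A C \<rho> = {\<zero>\<^bsub>A\<^esub>}"
    using additive_subgroup.zero_closed[OF ideal.axioms(1)[OF ring_hom_ring.kernel_is_ideal[OF \<rho>]]]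
    by blast
  then show ?thesis
    using ring_hom_ring.inj_iff_trivial_ker[OF \<rho>] by blast
qed

lemma inj_on_right_if_kernel_fst_subset_kernel_snd:
  assumes "ring A" "ring B" "ring C" "\<rho> \<in> ring_hom A C" "\<sigma> \<in> ring_hom B C"
    and sub: "a_kernel (fiber_product A B \<rho> \<sigma>) A fst \<subseteq> a_kernel (fiber_product A B \<rho> \<sigma>) B snd"
  shows "inj_on \<sigma> (carrier B)"
proof -
  have \<sigma>: "ring_hom_ring B C \<sigma>" and \<rho>0: "\<rho> \<zero>\<^bsub>A\<^esub> = \<zero>\<^bsub>C\<^esub>"
    using assms ring_hom_ringI2 ring_hom_zero by blast+
  have "b = \<zero>\<^bsub>B\<^esub>" if "b \<in> a_kernel B C \<sigma>" for b
  proof -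
    have "(\<zero>\<^bsub>A\<^esub>, b) \<in> a_kernel (fiber_product A B \<rho> \<sigma>) A fst"
      using that \<rho>0 ring.ring_simprules(2)[OF assms(1)]
      by (simp add: a_kernel_def' carrier_fiber_product)
    with sub show ?thesis
      by (simp add: a_kernel_def' subset_iff)
  qed
  then have "a_kernel B C \<sigma> = {\<zero>\<^bsub>B\<^esub>}"
    using additive_subgroup.zero_closed[OF ideal.axioms(1)[OF ring_hom_ring.kernel_is_ideal[OF \<sigma>]]]
    by blast
  then show ?thesis
    using ring_hom_ring.inj_iff_trivial_ker[OF \<sigma>] by blast
qed

lemma inj_on_left_or_right_if_ideals_chain_fiber_product:
  assumes "ring A" "ring B" "ring C" "\<rho> \<in> ring_hom A C" "\<sigma> \<in> ring_hom B C"
    and "ideals_chain (fiber_product A B \<rho> \<sigma>)"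
  shows "inj_on \<rho> (carrier A) \<or> inj_on \<sigma> (carrier B)"
proof -
  have D: "ring (fiber_product A B \<rho> \<sigma>)"
    using ring_fiber_product assms by blast
  have "ideal (a_kernel (fiber_product A B \<rho> \<sigma>) A fst) (fiber_product A B \<rho> \<sigma>)"
       "ideal (a_kernel (fiber_product A B \<rho> \<sigma>) B snd) (fiber_product A B \<rho> \<sigma>)"
    using ring_hom_ring.kernel_is_ideal ring_hom_ringI2 D assms(1,2)
      fst_ring_hom_fiber_product snd_ring_hom_fiber_product by blast+
  then show ?thesis
    using assms(6) inj_on_left_if_kernel_snd_subset_kernel_fst[OF assms(1-5)]
      inj_on_right_if_kernel_fst_subset_kernel_snd[OF assms(1-5)]
    unfolding ideals_chain_def by blast
qed

theorem proposition4p9: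
  fixes A :: "('a, 'm) ring_scheme" and B :: "('b, 'n) ring_scheme" and C :: "('c, 'k) ring_scheme"
    and \<rho> :: "'a \<Rightarrow> 'c" and \<sigma> :: "'b \<Rightarrow> 'c"
  assumes "cring A" and "cring B" and "cring C"
    and "\<rho> \<in> ring_hom A C" and "\<sigma> \<in> ring_hom B C"
  shows "ideals_chain (fiber_product A B \<rho> \<sigma>) \<longleftrightarrow>
     ((inj_on \<rho> (carrier A) \<and>
        ideals_chain (B \<lparr> carrier := snd ` carrier (fiber_product A B \<rho> \<sigma>) \<rparr>))
    \<or> (inj_on \<sigma> (carrier B) \<and>
        ideals_chain (A \<lparr> carrier := fst ` carrier (fiber_product A B \<rho> \<sigma>) \<rparr>)))"
proof -
  have rings: "ring A" "ring B" "ring C"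
    using assms(1-3) cring.axioms(1) by blast+
  note homs = assms(4,5)
  have D: "ring (fiber_product A B \<rho> \<sigma>)"
    using ring_fiber_product[OF rings homs] .
  have "ideals_chain (fiber_product A B \<rho> \<sigma>) \<longleftrightarrow>
          ideals_chain (B \<lparr> carrier := snd ` carrier (fiber_product A B \<rho> \<sigma>) \<rparr>)"
    if "inj_on \<rho> (carrier A)"
    using ideals_chain_iff_image_of_inj[OF D rings(2) snd_ring_hom_fiber_product]
      inj_on_snd_fiber_product[OF that] by blast
  moreover have "ideals_chain (fiber_product A B \<rho> \<sigma>) \<longleftrightarrow>
          ideals_chain (A \<lparr> carrier := fst ` carrier (fiber_product A B \<rho> \<sigma>) \<rparr>)"
    if "inj_on \<sigma> (carrier B)"
    using ideals_chain_iff_image_of_inj[OF D rings(1) fst_ring_hom_fiber_product]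
      inj_on_fst_fiber_product[OF that] by blast
  ultimately show ?thesis
    using inj_on_left_or_right_if_ideals_chain_fiber_product[OF rings homs] by blast
qed

end
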